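(* Suppose hypothesis (H) holds. Then $-\infty<\lambda^*<+\infty$, and there exists $u^*\in S$ with $\lambda(u^* )=\lambda^*$.
   Context: $T,G:\mathbb{R}^n\to\mathbb{R}^n$ are continuously differentiable. $\Sigma=\{\psi\in\mathbb{R}^n\setminus\{0\}:\psi_i\ge0\ \forall i\}$. $S\subset\mathbb{R}^n$ is a nonempty open set with $\langle G(u),\psi\rangle>0$ for all $u\in S,\psi\in\Sigma$. For $u\in S$, $\lambda(u)=\inf_{\psi\in\Sigma}\langle T(u),\psi\rangle/\langle G(u),\psi\rangle$, and $\lambda^*=\sup_{u\in S}\lambda(u)$. Hypothesis (H): for every $u_0\in S$ the set $S(u_0)=\{u\in S:\lambda(u)\ge\lambda(u_0)\}$ is bounded and its closure is contained in $S$. *)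

theory Defs
  imports "HOL-Analysis.Analysis"
begin

definition C1_map :: "(real^'n \<Rightarrow> real^'n) \<Rightarrow> bool" where
  "C1_map F \<longleftrightarrow> (\<exists>F'. (\<forall>x. (F has_derivative blinfun_apply (F' x)) (at x)) \<and> continuous_on UNIV F')"

definition Sigma_cone :: "(real^'n) set" where
  "Sigma_cone = {\<psi>. \<psi> \<noteq> 0 \<and> (\<forall>i. \<psi> $ i \<ge> 0)}"

definition lam :: "(real^'n \<Rightarrow> real^'n) \<Rightarrow> (real^'n \<Rightarrow> real^'n) \<Rightarrow> real^'n \<Rightarrow> ereal" where
  "lam T G u = (INF \<psi>\<in>Sigma_cone. ereal ((T u \<bullet> \<psi>) / (G u \<bullet> \<psi>)))"

definition lam_star :: "(real^'n \<Rightarrow> real^'n) \<Rightarrow> (real^'n \<Rightarrow> real^'n) \<Rightarrow> (real^'n) set \<Rightarrow> ereal" where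
  "lam_star T G S = (SUP u\<in>S. lam T G u)"

definition hyp_H :: "(real^'n \<Rightarrow> real^'n) \<Rightarrow> (real^'n \<Rightarrow> real^'n) \<Rightarrow> (real^'n) set \<Rightarrow> bool" where
  "hyp_H T G S \<longleftrightarrow> (\<forall>u0\<in>S. bounded {u\<in>S. lam T G u \<ge> lam T G u0}
                          \<and> closure {u\<in>S. lam T G u \<ge> lam T G u0} \<subseteq> S)"

end

theory Submission imports Defs begin

text \<open>The Collatz--Wielandt quotient is bounded below because, for \<open>\<psi>\<close> in the cone, both
  \<open>T u \<bullet> \<psi>\<close> and \<open>G u \<bullet> \<psi>\<close> are comparable with \<open>\<Sum>i. \<psi>$i\<close> (and \<open>G u\<close> has positive
  entries), and bounded above by its value at \<open>\<psi> = 1\<close>. It is upper semicontinuous, being an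
  infimum of continuous functions. Hypothesis (H) makes the closure of a superlevel set a
  compact subset of \<open>S\<close>, so a maximizing sequence has a limit point in \<open>S\<close> at which
  \<open>\<lambda>\<close> attains its supremum.\<close>

lemma axis_in_Sigma_cone: "axis i (1::real) \<in> Sigma_cone"
  unfolding Sigma_cone_def by (auto simp: axis_def vec_eq_iff)

lemma one_in_Sigma_cone: "(1::real^'n) \<in> Sigma_cone"
  unfolding Sigma_cone_def by auto

lemma inner_ratio_lower_bound:
  fixes a b \<psi> :: "real^'n"
  assumes b_pos: "\<And>i. b $ i > 0" and \<psi>_nonneg: "\<And>i. \<psi> $ i \<ge> 0" and "\<psi> \<noteq> 0"
  shows "- ((\<Sum>j\<in>UNIV. \<bar>a $ j\<bar>) / Min (range (\<lambda>i. b $ i))) \<le> (a \<bullet> \<psi>) / (b \<bullet> \<psi>)"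
proof -
  define M where "M = (\<Sum>j\<in>UNIV. \<bar>a $ j\<bar>)"
  define m where "m = Min (range (\<lambda>i. b $ i))"
  define s where "s = (\<Sum>i\<in>UNIV. \<psi> $ i)"
  have "m > 0" unfolding m_def using b_pos by simp
  have M_ge: "\<bar>a $ i\<bar> \<le> M" for i
    unfolding M_def by (rule member_le_sum) auto
  have "- M * s \<le> a \<bullet> \<psi>"
  proof -
    have "- M * \<psi> $ i \<le> a $ i * \<psi> $ i" for i
      using M_ge[of i] \<psi>_nonneg[of i] by (intro mult_right_mono) auto
    then show ?thesis
      unfolding inner_vec_def s_def sum_distrib_left by (intro sum_mono) simp
  qed
  moreover have "m * s \<le> b \<bullet> \<psi>"
  proof -
    have "m * \<psi> $ i \<le> b $ i * \<psi> $ i" for i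
      unfolding m_def using \<psi>_nonneg[of i] by (intro mult_right_mono) auto
    then show ?thesis
      unfolding inner_vec_def s_def sum_distrib_left by (intro sum_mono) simp
  qed
  moreover have "b \<bullet> \<psi> > 0"
  proof -
    obtain i where "\<psi> $ i \<noteq> 0" using \<open>\<psi> \<noteq> 0\<close> by (auto simp: vec_eq_iff)
    then have "0 < b $ i * \<psi> $ i" using b_pos \<psi>_nonneg by (simp add: less_le)
    also have "\<dots> \<le> b \<bullet> \<psi>"
      unfolding inner_vec_def inner_real_def
      using b_pos \<psi>_nonneg by (intro member_le_sum) (auto intro: mult_nonneg_nonneg less_imp_le)
    finally show ?thesis .
  qed
  moreover have "M \<ge> 0" using M_ge[of undefined] by linarith
  ultimately have "- (M * (b \<bullet> \<psi>)) \<le> m * (a \<bullet> \<psi>)"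
    using \<open>m > 0\<close> mult_left_mono[of "m * s" "b \<bullet> \<psi>" M] mult_left_mono[of "- M * s" "a \<bullet> \<psi>" m]
    by (simp add: algebra_simps)
  with \<open>m > 0\<close> \<open>b \<bullet> \<psi> > 0\<close> show ?thesis
    unfolding M_def[symmetric] m_def[symmetric] by (simp add: field_simps)
qed

lemma lam_gt_MInfty:
  assumes "\<And>\<psi>. \<psi> \<in> Sigma_cone \<Longrightarrow> G u \<bullet> \<psi> > 0"
  shows "lam T G u > -\<infinity>"
proof -
  have "G u $ i > 0" for i
    using assms[OF axis_in_Sigma_cone[of i]] by (simp add: inner_axis)
  then have "ereal (- ((\<Sum>j\<in>UNIV. \<bar>T u $ j\<bar>) / Min (range (\<lambda>i. G u $ i)))) \<le> lam T G u"
    unfolding lam_def Sigma_cone_def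
    by (intro INF_greatest) (simp add: inner_ratio_lower_bound)
  then show ?thesis by (auto simp: less_le_trans)
qed

lemma lam_lt_PInfty: "lam T G u < \<infinity>"
proof -
  have "lam T G u \<le> ereal ((T u \<bullet> 1) / (G u \<bullet> 1))"
    unfolding lam_def by (rule INF_lower) (rule one_in_Sigma_cone)
  then show ?thesis by (rule order_le_less_trans) simp
qed

lemma lam_ge_of_tendsto:
  fixes T G :: "real^'n \<Rightarrow> real^'n"
  assumes "isCont T l" "isCont G l" "x \<longlonglongrightarrow> l"
    and "\<And>\<psi>. \<psi> \<in> Sigma_cone \<Longrightarrow> G l \<bullet> \<psi> \<noteq> 0"
    and "\<forall>\<^sub>F k in sequentially. c \<le> lam T G (x k)"
  shows "c \<le> lam T G l"
  unfolding lam_def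
proof (rule INF_greatest)
  fix \<psi> :: "real^'n" assume "\<psi> \<in> Sigma_cone"
  have "(\<lambda>k. ereal ((T (x k) \<bullet> \<psi>) / (G (x k) \<bullet> \<psi>))) \<longlonglongrightarrow> ereal ((T l \<bullet> \<psi>) / (G l \<bullet> \<psi>))"
    using assms(1-4) \<open>\<psi> \<in> Sigma_cone\<close>
    by (intro tendsto_intros isCont_tendsto_compose[where g = T] isCont_tendsto_compose[where g = G])
      auto
  moreover have "\<forall>\<^sub>F k in sequentially. c \<le> ereal ((T (x k) \<bullet> \<psi>) / (G (x k) \<bullet> \<psi>))"
    using assms(5) by eventually_elim
      (use \<open>\<psi> \<in> Sigma_cone\<close> in \<open>auto simp: lam_def intro: order_trans INF_lower\<close>)
  ultimately show "c \<le> ereal ((T l \<bullet> \<psi>) / (G l \<bullet> \<psi>))"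
    by (rule tendsto_lowerbound) simp
qed

lemma maximizing_sequence_ereal:
  fixes f :: "'a \<Rightarrow> ereal"
  assumes "x0 \<in> S"
  obtains x where "\<And>n. x n \<in> S" "\<And>n. f x0 \<le> f (x n)" "incseq (f \<circ> x)"
    "(SUP n. f (x n)) = (SUP u\<in>S. f u)"
proof -
  obtain y where y: "incseq y" "range y \<subseteq> f ` S" "(SUP u\<in>S. f u) = (SUP n. y n)"
    using Sup_countable_SUP[of "f ` S"] assms by auto
  define z where "z n = max (y n) (f x0)" for n
  have "z n \<in> f ` S" for n
    using y(2) assms unfolding z_def max_def by auto
  then have "\<forall>n. \<exists>u. u \<in> S \<and> f u = z n" by (metis imageE)
  then obtain x where x: "\<And>n. x n \<in> S" "\<And>n. f (x n) = z n"
    by metis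
  show thesis
  proof
    show "incseq (f \<circ> x)"
      using y(1) unfolding incseq_def o_def x z_def by (meson max.mono order_refl)
    show "(SUP n. f (x n)) = (SUP u\<in>S. f u)"
    proof (rule antisym)
      show "(SUP n. f (x n)) \<le> (SUP u\<in>S. f u)"
        using x(1) by (auto intro!: SUP_least SUP_upper)
      show "(SUP u\<in>S. f u) \<le> (SUP n. f (x n))"
        unfolding y(3) x z_def by (rule SUP_mono) (use max.cobounded1 in blast)
    qed
  qed (auto simp: x z_def)
qed

lemma SUP_attained_if_superlevel_compact:
  fixes f :: "'a::first_countable_topology \<Rightarrow> ereal"
  assumes "x0 \<in> S"
    and compact: "compact (closure {u\<in>S. f x0 \<le> f u})"
    and closure_sub: "closure {u\<in>S. f x0 \<le> f u} \<subseteq> S"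
    and usc: "\<And>x l c. x \<longlonglongrightarrow> l \<Longrightarrow> l \<in> S \<Longrightarrow> \<forall>\<^sub>F k in sequentially. c \<le> f (x k)
                \<Longrightarrow> c \<le> f l"
  shows "\<exists>l\<in>S. f l = (SUP u\<in>S. f u)"
proof -
  obtain x where x: "\<And>n. x n \<in> S" "\<And>n. f x0 \<le> f (x n)" "incseq (f \<circ> x)"
    "(SUP n. f (x n)) = (SUP u\<in>S. f u)"
    using maximizing_sequence_ereal[OF \<open>x0 \<in> S\<close>] by blast
  have "\<forall>n. x n \<in> closure {u\<in>S. f x0 \<le> f u}"
    using x(1,2) closure_subset by fast
  from seq_compactE[OF compact_imp_seq_compact[OF compact] this] obtain l r
    where l: "l \<in> closure {u\<in>S. f x0 \<le> f u}" "strict_mono r" "(x \<circ> r) \<longlonglongrightarrow> l" .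
  have "l \<in> S" using closure_sub l(1) by (rule subsetD)
  have "f (x m) \<le> f l" for m
  proof (rule usc[OF l(3) \<open>l \<in> S\<close>])
    show "\<forall>\<^sub>F k in sequentially. f (x m) \<le> f ((x \<circ> r) k)"
    proof (rule eventually_sequentiallyI[of m])
      fix k assume "m \<le> k"
      then have "m \<le> r k" using seq_suble[OF l(2), of k] by linarith
      then show "f (x m) \<le> f ((x \<circ> r) k)" using x(3) by (simp add: incseq_def)
    qed
  qed
  then have "(SUP u\<in>S. f u) \<le> f l" unfolding x(4)[symmetric] by (rule SUP_least)
  moreover have "f l \<le> (SUP u\<in>S. f u)" using \<open>l \<in> S\<close> by (rule SUP_upper)
  ultimately show ?thesis using \<open>l \<in> S\<close> by (blast intro: antisym)
qed

lemma C1_map_isCont: "C1_map F \<Longrightarrow> isCont F x"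
  unfolding C1_map_def by (auto intro: has_derivative_continuous)

theorem lemma2:
  fixes T G :: "real^'n \<Rightarrow> real^'n" and S :: "(real^'n) set"
  assumes "C1_map T" and "C1_map G"
    and "S \<noteq> {}" and "open S"
    and "\<And>u \<psi>. u \<in> S \<Longrightarrow> \<psi> \<in> Sigma_cone \<Longrightarrow> G u \<bullet> \<psi> > 0"
    and "hyp_H T G S"
  shows "- \<infinity> < lam_star T G S \<and> lam_star T G S < \<infinity>
         \<and> (\<exists>u\<in>S. lam T G u = lam_star T G S)"
proof -
  obtain u0 where "u0 \<in> S" using assms(3) by blast
  have "\<exists>u\<in>S. lam T G u = lam_star T G S"
    unfolding lam_star_def
  proof (rule SUP_attained_if_superlevel_compact[OF \<open>u0 \<in> S\<close>])
    show "compact (closure {u\<in>S. lam T G u0 \<le> lam T G u})"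
         "closure {u\<in>S. lam T G u0 \<le> lam T G u} \<subseteq> S"
      using assms(6) \<open>u0 \<in> S\<close> unfolding hyp_H_def by auto
  next
    fix x l c assume "x \<longlonglongrightarrow> l" "l \<in> S" "\<forall>\<^sub>F k in sequentially. c \<le> lam T G (x k)"
    moreover have "G l \<bullet> \<psi> \<noteq> 0" if "\<psi> \<in> Sigma_cone" for \<psi>
      using assms(5)[OF \<open>l \<in> S\<close> that] by simp
    ultimately show "c \<le> lam T G l"
      by (intro lam_ge_of_tendsto C1_map_isCont assms(1,2))
  qed
  then obtain u where "u \<in> S" "lam T G u = lam_star T G S" by blast
  moreover have "- \<infinity> < lam T G u0"
    using assms(5) \<open>u0 \<in> S\<close> by (intro lam_gt_MInfty) blast
  then have "- \<infinity> < lam_star T G S"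
    unfolding lam_star_def using \<open>u0 \<in> S\<close> by (blast intro: order_less_le_trans SUP_upper)
  ultimately show ?thesis using lam_lt_PInfty[of T G u] by auto
qed

end
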